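(* Let $N\in\mathbb{N}$. Let $$\mathcal{B}'(N)=\{(q_1',q_2')\in\mathbb{Z}^2 \mid q_1'+q_2' \text{ is even and } 2q_1'^2+2q_2'^2-2q_1'-q_2'=N\},$$ let $\mathcal{U}(8N+5)=\{(x,y)\in\mathbb{Z}^2\mid x^2+y^2=8N+5\}$, and let $\varphi:\mathcal{B}'(N)\to\mathcal{U}(8N+5)$ be the (well-defined) map $\varphi(q_1',q_2')=(4q_1'-2,\,4q_2'-1)$. Let the dihedral group $D_8=\langle r,s\mid r^4=s^2=(rs)^2=1\rangle$ act on $\mathcal{U}(8N+5)$ by $r(x,y)=(-y,x)$ and $s(x,y)=(y,x)$. Then: (1) the action of $D_8$ on $\mathcal{U}(8N+5)$ is free; (2) the image $\varphi(\mathcal{B}'(N))$ is a complete set of representatives of the $D_8$-orbits of $\mathcal{U}(8N+5)$.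
   Context: The set $\mathcal{B}'(N)$ is the image, under the isometry $u$ of $\mathbb{R}^2$ with matrix $\frac{1}{\sqrt2}\begin{pmatrix}1&1\\1&-1\end{pmatrix}$, of the set of elements of the lattice $M=\sqrt2\mathbb{Z}\varepsilon_1\oplus\sqrt2\mathbb{Z}\varepsilon_2$ of type $C_2^{(1)}$ with $\Lambda_0$-atomic length $N$ (equivalently, affine Grassmannian elements of type $C_2^{(1)}$, in bijection with self-conjugate $4$-cores of size $N$); the defining quadratic expression is that atomic length written in the coordinates $(q_1',q_2')$. *)

theory Defs
  imports Main
begin

definition Bp :: "nat \<Rightarrow> (int \<times> int) set" where
  "Bp N = {(q1, q2). even (q1 + q2) \<and> 2*q1^2 + 2*q2^2 - 2*q1 - q2 = int N}"

definition U :: "int \<Rightarrow> (int \<times> int) set" where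
  "U m = {(x, y). x^2 + y^2 = m}"

definition phi :: "int \<times> int \<Rightarrow> int \<times> int" where
  "phi = (\<lambda>(q1, q2). (4*q1 - 2, 4*q2 - 1))"

definition rD :: "int \<times> int \<Rightarrow> int \<times> int" where
  "rD = (\<lambda>(x, y). (-y, x))"

definition sD :: "int \<times> int \<Rightarrow> int \<times> int" where
  "sD = (\<lambda>(x, y). (y, x))"

definition D8 :: "(int \<times> int \<Rightarrow> int \<times> int) set" where
  "D8 = {(rD ^^ k) \<circ> (sD ^^ j) | k j. k < (4::nat) \<and> j < (2::nat)}"

definition orbitD8 :: "int \<times> int \<Rightarrow> (int \<times> int) set" where
  "orbitD8 p = {g p | g. g \<in> D8}"

end

theory Submission
  imports Defs
begin

text \<open>Squares are 0, 1 or 4 modulo 8, so a point of U(8N+5) has one coordinate congruent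
  to 2 modulo 4 and the other odd. Such a point lies on neither an axis nor a diagonal, hence
  D_8 acts freely. The map phi is a bijection of B'(N) onto the points of U(8N+5) congruent to
  (2, 3) or (6, 7) modulo 8, and an orbit {(\<plusminus>x, \<plusminus>y), (\<plusminus>y, \<plusminus>x)} contains exactly one such
  point: the even coordinate must come first, and exactly one of the four sign choices then
  lands in the right residue classes.\<close>

lemma D8_eq:
  "D8 = {\<lambda>(x, y). (x, y), \<lambda>(x, y). (-y, x), \<lambda>(x, y). (-x, -y), \<lambda>(x, y). (y, -x),
         \<lambda>(x, y). (y, x), \<lambda>(x, y). (-x, y), \<lambda>(x, y). (-y, -x), \<lambda>(x, y). (x, -y)}"
proof -
  have "D8 = (\<lambda>(k, j). (rD ^^ k) \<circ> (sD ^^ j)) ` ({..<4} \<times> {..<2})"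
    unfolding D8_def by auto
  also have "\<dots> = (\<lambda>(k, j). (rD ^^ k) \<circ> (sD ^^ j)) ` ({0, 1, 2, 3} \<times> {0, 1})"
    by (simp add: numeral_eq_Suc lessThan_Suc insert_commute)
  finally show ?thesis
    by (simp add: rD_def sD_def numeral_eq_Suc comp_def case_prod_beta' insert_commute)
qed

lemma orbitD8_eq:
  "orbitD8 (x, y) = {(x, y), (-y, x), (-x, -y), (y, -x), (y, x), (-x, y), (-y, -x), (x, -y)}"
proof -
  have "orbitD8 p = (\<lambda>g. g p) ` D8" for p
    unfolding orbitD8_def by auto
  then show ?thesis
    unfolding D8_eq by simp
qed

lemma orbitD8_iff: "(a, b) \<in> orbitD8 (x, y) \<longleftrightarrow> {\<bar>a\<bar>, \<bar>b\<bar>} = {\<bar>x\<bar>, \<bar>y\<bar>}"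
  unfolding orbitD8_eq doubleton_eq_iff abs_eq_iff by auto

lemma orbitD8_eq_if_mem:
  assumes "q \<in> orbitD8 p"
  shows "orbitD8 q = orbitD8 p"
  using assms by (cases p, cases q) (auto simp: orbitD8_iff)

lemma orbitD8_swap: "orbitD8 (y, x) = orbitD8 (x, y)"
  by (rule orbitD8_eq_if_mem) (simp add: orbitD8_eq)

lemma orbitD8_subset_U:
  assumes "p \<in> U m"
  shows "orbitD8 p \<subseteq> U m"
  using assms by (cases p) (auto simp: orbitD8_eq U_def)

lemma D8_fixed_point_imp_id:
  assumes "g \<in> D8" "g (x, y) = (x, y)" "x \<noteq> 0" "y \<noteq> 0" "x \<noteq> y" "x \<noteq> -y"
  shows "g = id"
  using assms unfolding D8_eq by (elim insertE emptyE; simp add: fun_eq_iff; linarith)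

lemma square_mod_8: "(x::int)^2 mod 8 = (if odd x then 1 else if x mod 4 = 0 then 0 else 4)"
proof -
  have "x^2 mod 8 = (x mod 8)^2 mod 8"
    by (simp add: power_mod)
  moreover have "x mod 8 = 0 \<or> x mod 8 = 1 \<or> x mod 8 = 2 \<or> x mod 8 = 3 \<or>
                 x mod 8 = 4 \<or> x mod 8 = 5 \<or> x mod 8 = 6 \<or> x mod 8 = 7"
    by presburger
  ultimately show ?thesis
    by (elim disjE) (simp; presburger)+
qed

lemma sum_squares_mod_8_eq_5:
  fixes x y :: int
  assumes "(x^2 + y^2) mod 8 = 5"
  shows "x mod 4 = 2 \<and> odd y \<or> odd x \<and> y mod 4 = 2"
proof -
  have "(x^2 mod 8 + y^2 mod 8) mod 8 = 5"
    using assms by (simp add: mod_add_eq)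
  then show ?thesis
    unfolding square_mod_8 by (simp split: if_splits; presburger)
qed

lemma U_8N_5_mod_4:
  assumes "(x, y) \<in> U (8 * int N + 5)"
  shows "x mod 4 = 2 \<and> odd y \<or> odd x \<and> y mod 4 = 2"
  using assms by (intro sum_squares_mod_8_eq_5) (simp add: U_def)

definition phi_residues :: "(int \<times> int) set" where
  "phi_residues = {(x, y). (x mod 8, y mod 8) \<in> {(2, 3), (6, 7)}}"

lemma phi_residues_iff:
  "(x, y) \<in> phi_residues \<longleftrightarrow> (\<exists>q1 q2. even (q1 + q2) \<and> x = 4*q1 - 2 \<and> y = 4*q2 - 1)"
  unfolding phi_residues_def by simp presburger

lemma phi_sum_squares:
  "(4*q1 - 2)^2 + (4*q2 - 1)^2 = 8 * (2*q1^2 + 2*q2^2 - 2*q1 - q2) + (5::int)"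
  by (simp add: power2_eq_square algebra_simps)

lemma phi_image_Bp: "phi ` Bp N = U (8 * int N + 5) \<inter> phi_residues"
proof -
  have "(x, y) \<in> phi ` Bp N \<longleftrightarrow> (x, y) \<in> U (8 * int N + 5) \<inter> phi_residues" for x y
  proof -
    have "(x, y) \<in> phi ` Bp N \<longleftrightarrow> (\<exists>q1 q2. even (q1 + q2) \<and> x = 4*q1 - 2 \<and> y = 4*q2 - 1
            \<and> 2*q1^2 + 2*q2^2 - 2*q1 - q2 = int N)"
      unfolding Bp_def phi_def by auto
    also have "\<dots> \<longleftrightarrow> (\<exists>q1 q2. even (q1 + q2) \<and> x = 4*q1 - 2 \<and> y = 4*q2 - 1
            \<and> x^2 + y^2 = 8 * int N + 5)"
      using phi_sum_squares by auto
    also have "\<dots> \<longleftrightarrow> (x, y) \<in> U (8 * int N + 5) \<inter> phi_residues"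
      unfolding Int_iff phi_residues_iff by (auto simp: U_def)
    finally show ?thesis .
  qed
  then show ?thesis
    by auto
qed

lemma orbitD8_Int_phi_residues:
  assumes "q \<in> phi_residues"
  shows "orbitD8 q \<inter> phi_residues = {q}"
proof (cases q)
  case (Pair a b)
  have "a mod 8 = 2 \<and> b mod 8 = 3 \<or> a mod 8 = 6 \<and> b mod 8 = 7"
    using assms Pair by (simp add: phi_residues_def)
  then have "(-b, a) \<notin> phi_residues \<and> (-a, -b) \<notin> phi_residues \<and> (b, -a) \<notin> phi_residues
      \<and> (b, a) \<notin> phi_residues \<and> (-a, b) \<notin> phi_residues \<and> (-b, -a) \<notin> phi_residues
      \<and> (a, -b) \<notin> phi_residues"
    unfolding phi_residues_def by simp presburger
  with assms show ?thesis
    unfolding Pair orbitD8_eq by auto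
qed

lemma orbitD8_meets_phi_residues:
  assumes "x mod 4 = 2 \<and> odd y \<or> odd x \<and> y mod 4 = 2"
  shows "\<exists>q\<in>orbitD8 (x, y). q \<in> phi_residues"
proof -
  have sign_change: "\<exists>q\<in>orbitD8 (a, b). q \<in> phi_residues" if "a mod 4 = 2" "odd b" for a b
  proof -
    have "\<exists>q\<in>{(a, b), (-a, -b), (-a, b), (a, -b)}. q \<in> phi_residues"
      using that unfolding phi_residues_def by simp presburger
    then show ?thesis
      unfolding orbitD8_eq by blast
  qed
  from assms show ?thesis
    using sign_change[of x y] sign_change[of y x] orbitD8_swap by auto
qed

lemma ex_orbitD8_Int_phi_residues_eq_singleton:
  assumes "x mod 4 = 2 \<and> odd y \<or> odd x \<and> y mod 4 = 2"
  shows "\<exists>q. orbitD8 (x, y) \<inter> phi_residues = {q}"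
proof -
  obtain q where "q \<in> orbitD8 (x, y)" "q \<in> phi_residues"
    using orbitD8_meets_phi_residues[OF assms] by blast
  then show ?thesis
    using orbitD8_Int_phi_residues orbitD8_eq_if_mem by metis
qed

theorem theorem8p8:
  fixes N :: nat
  shows "phi ` Bp N \<subseteq> U (8 * int N + 5)
    \<and> (\<forall>g\<in>D8. \<forall>p\<in>U (8 * int N + 5). g p = p \<longrightarrow> g = id)
    \<and> (\<forall>p\<in>U (8 * int N + 5). \<exists>!q. q \<in> phi ` Bp N \<and> q \<in> orbitD8 p)"
proof (intro conjI ballI impI)
  show "phi ` Bp N \<subseteq> U (8 * int N + 5)"
    by (simp add: phi_image_Bp)
next
  fix g p
  assume g: "g \<in> D8" "g p = p" and "p \<in> U (8 * int N + 5)"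
  then obtain x y where [simp]: "p = (x, y)" and "x mod 4 = 2 \<and> odd y \<or> odd x \<and> y mod 4 = 2"
    using U_8N_5_mod_4 by (cases p) blast
  then have "x \<noteq> 0 \<and> y \<noteq> 0 \<and> x \<noteq> y \<and> x \<noteq> -y"
    by presburger
  then show "g = id"
    using D8_fixed_point_imp_id g by simp
next
  fix p
  assume p: "p \<in> U (8 * int N + 5)"
  then obtain q where "orbitD8 p \<inter> phi_residues = {q}"
    using U_8N_5_mod_4 ex_orbitD8_Int_phi_residues_eq_singleton by (cases p) blast
  moreover have "orbitD8 p \<subseteq> U (8 * int N + 5)"
    using orbitD8_subset_U p .
  ultimately show "\<exists>!q. q \<in> phi ` Bp N \<and> q \<in> orbitD8 p"
    unfolding phi_image_Bp by (intro ex1I[of _ q]) blast+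
qed

end
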